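(* For every odd integer $s\ge5$ there exists a linear $(2,s-1,s,2)$-AONT.
   Context: A linear $(t_i,t_o,s,q)$-AONT is given by an invertible $s\times s$ matrix $M$ over $\mathbb{F}_q$ defining the map $\mathbf{x}\mapsto\mathbf{y}=\mathbf{x}M^{-1}$ on row vectors of $\mathbb{F}_q^s$, such that for every set $I$ of $t_i$ input coordinates and every set $J$ of $s-t_o$ output coordinates, the pair $((x_i)_{i\in I},(y_j)_{j\in J})$ takes every value in $\mathbb{F}_q^{t_i+s-t_o}$ equally often as $\mathbf{x}$ ranges over $\mathbb{F}_q^s$. Equivalently, $M$ is invertible and every $t_o\times t_i$ submatrix of $M$ has rank $t_i$. *)

theory Defs
  imports "HOL-Library.Z2" "Jordan_Normal_Form.DL_Rank" "Jordan_Normal_Form.DL_Submatrix"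
begin

text \<open>Rows of M correspond to outputs y, columns to inputs x, since
  x = y M.\<close>

definition linear_AONT :: "nat \<Rightarrow> nat \<Rightarrow> nat \<Rightarrow> nat \<Rightarrow> 'a::field mat \<Rightarrow> bool" where
  "linear_AONT t_i t_o s q M \<longleftrightarrow>
     q = card (UNIV :: 'a set) \<and>
     M \<in> carrier_mat s s \<and> invertible_mat M \<and>
     (\<forall>I J. I \<subseteq> {..<s} \<and> card I = t_i \<and> J \<subseteq> {..<s} \<and> card J = t_o \<longrightarrow>
        vec_space.rank t_o (submatrix M J I :: 'a mat) = t_i)"

end

theory Submission
  imports Defs "Jordan_Normal_Form.DL_Rank_Submatrix"
begin

text \<open>Take M = [[A - I, \<one>], [0, 1]] over GF(2), with A the all-ones (s-1) x (s-1) matrix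
  and \<one> the all-ones column. Since s - 1 is even, (A - I)^2 = (s - 1) A + I = I and
  (A - I) \<one> + \<one> = (s - 1) \<one> = 0, so M is an involution and in particular invertible.
  A 2-column submatrix has rank 2 as soon as two of its rows form a nonsingular 2 x 2 minor.
  For s \<ge> 4, deleting one row of M always leaves such a pair for any columns a < b:
  if b < s - 1, the rows a, b or one of them together with a row x outside {a, b, s - 1};
  if b = s - 1, a row from {a, s - 1} together with a row x < s - 1 other than a.\<close>

lemma card_UNIV_bit: "card (UNIV :: bit set) = 2"
proof -
  have "UNIV = {0 :: bit, 1}"
    using bit_not_zero_iff by blast
  then show ?thesis by (metis card_2_iff zero_neq_one)
qed

lemma of_nat_bit: "(of_nat n :: bit) = of_bool (odd n)"
  by (induction n) auto

lemma det_2x2: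
  assumes "(A :: 'a :: comm_ring_1 mat) \<in> carrier_mat 2 2"
  shows "det A = A $$ (0,0) * A $$ (1,1) - A $$ (0,1) * A $$ (1,0)"
proof -
  have "det A = (\<Sum>j<2. A $$ (0,j) * cofactor A 0 j)"
    by (rule laplace_expansion_row[OF assms]) simp
  also have "\<dots> = A $$ (0,0) * cofactor A 0 0 + A $$ (0,1) * cofactor A 0 1"
    by (simp add: numeral_2_eq_2)
  moreover have "cofactor A 0 0 = A $$ (1,1)" "cofactor A 0 1 = - A $$ (1,0)"
    unfolding cofactor_def using assms by (subst det_single; auto simp: mat_delete_def)+
  ultimately show ?thesis by simp
qed

lemma card_less_in_pair:
  assumes "u < (v :: 'a :: linorder)"
  shows "card {x \<in> {u,v}. x < u} = 0" "card {x \<in> {u,v}. x < v} = 1"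
proof -
  have "{x \<in> {u,v}. x < u} = {}" "{x \<in> {u,v}. x < v} = {u}"
    using assms by auto
  then show "card {x \<in> {u,v}. x < u} = 0" "card {x \<in> {u,v}. x < v} = 1" by simp_all
qed

lemma det_submatrix_pair:
  fixes A :: "'a :: comm_ring_1 mat"
  assumes r: "r1 < r2" "r2 < dim_row A" and c: "c1 < c2" "c2 < dim_col A"
  shows "det (submatrix A {r1,r2} {c1,c2})
    = A $$ (r1,c1) * A $$ (r2,c2) - A $$ (r1,c2) * A $$ (r2,c1)"
proof -
  let ?S = "submatrix A {r1,r2} {c1,c2}"
  have rows: "{i. i < dim_row A \<and> i \<in> {r1,r2}} = {r1,r2}"
    and cols: "{j. j < dim_col A \<and> j \<in> {c1,c2}} = {c1,c2}"
    using r c by auto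
  have entry:
    "?S $$ (card {x \<in> {r1,r2}. x < r}, card {x \<in> {c1,c2}. x < c}) = A $$ (r,c)"
    if "r \<in> {r1,r2}" "c \<in> {c1,c2}" for r c
    using that r c by (intro submatrix_index_card) auto
  have "card {r1,r2} = 2" "card {c1,c2} = 2"
    using r c by simp_all
  then have "?S \<in> carrier_mat 2 2"
    by (intro carrier_matI) (simp_all only: dim_submatrix rows cols)
  moreover have "?S $$ (0,0) = A $$ (r1,c1)" "?S $$ (0,1) = A $$ (r1,c2)"
    "?S $$ (1,0) = A $$ (r2,c1)" "?S $$ (1,1) = A $$ (r2,c2)"
    using entry[of r1 c1] entry[of r1 c2] entry[of r2 c1] entry[of r2 c2]
    unfolding card_less_in_pair[OF r(1)] card_less_in_pair[OF c(1)] by simp_all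
  ultimately show ?thesis
    by (simp add: det_2x2 mult.commute)
qed

lemma rank_ge_2_if_minor_nonzero:
  fixes B :: "'a :: field mat"
  assumes B: "B \<in> carrier_mat n m"
    and r: "r1 \<noteq> r2" "r1 < n" "r2 < n" and c: "c1 < c2" "c2 < m"
    and minor: "B $$ (r1,c1) * B $$ (r2,c2) - B $$ (r1,c2) * B $$ (r2,c1) \<noteq> 0"
  shows "2 \<le> vec_space.rank n B"
proof -
  obtain r r' where rr': "r < r'" "r' < n"
    and "B $$ (r,c1) * B $$ (r',c2) - B $$ (r,c2) * B $$ (r',c1) \<noteq> 0"
  proof (cases "r1 < r2")
    case True
    then show ?thesis using that r minor by blast
  next
    case False
    then have "r2 < r1" using r(1) by simp
    moreover have "B $$ (r2,c1) * B $$ (r1,c2) - B $$ (r2,c2) * B $$ (r1,c1) \<noteq> 0"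
      using minor by (simp add: algebra_simps)
    ultimately show ?thesis using that r by blast
  qed
  then have "det (submatrix B {r,r'} {c1,c2}) \<noteq> 0"
    using B c by (simp add: det_submatrix_pair)
  moreover have "{j. j < m \<and> j \<in> {c1,c2}} = {c1,c2}"
    using c by auto
  ultimately show ?thesis
    using vec_space.rank_gt_minor[OF B] c by fastforce
qed

lemma rank_submatrix_two_columns:
  fixes M :: "'a :: field mat"
  assumes M: "M \<in> carrier_mat n m" and J: "J \<subseteq> {..<n}" and ab: "a < b" "b < m"
    and i: "i1 \<in> J" "i2 \<in> J" "i1 \<noteq> i2"
    and minor: "M $$ (i1,a) * M $$ (i2,b) - M $$ (i1,b) * M $$ (i2,a) \<noteq> 0"
  shows "vec_space.rank (card J) (submatrix M J {a,b}) = 2"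
proof -
  let ?B = "submatrix M J {a,b}"
  let ?pos = "\<lambda>i. card {x \<in> J. x < i}"
  have "finite J" using J finite_subset by blast
  have "{i. i < dim_row M \<and> i \<in> J} = J" "{j. j < dim_col M \<and> j \<in> {a,b}} = {a,b}"
    "card {a,b} = 2"
    using J M ab by auto
  then have B: "?B \<in> carrier_mat (card J) 2"
    by (intro carrier_matI) (simp_all only: dim_submatrix)
  have pos_less: "?pos i < card J" if "i \<in> J" for i
    using that \<open>finite J\<close> by (intro psubset_card_mono) auto
  have "?pos i1 \<noteq> ?pos i2"
    using pick_card_in_set i by metis
  moreover have entries: "?B $$ (?pos i, 0) = M $$ (i,a)" "?B $$ (?pos i, 1) = M $$ (i,b)"
    if "i \<in> J" for i
    using submatrix_index_card[of i M a J "{a,b}"] submatrix_index_card[of i M b J "{a,b}"]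
      that J M ab unfolding card_less_in_pair[OF ab(1)] by auto
  ultimately have "2 \<le> vec_space.rank (card J) ?B"
    using rank_ge_2_if_minor_nonzero[OF B _ pos_less pos_less, of i1 i2 0 1] i minor by simp
  moreover have "vec_space.rank (card J) ?B \<le> 2"
    by (rule vec_space.rank_le_nc[OF B])
  ultimately show ?thesis by simp
qed

lemma subset_card_pred_meets_pair:
  assumes J: "J \<subseteq> {..<s}" "card J = s - 1" and uv: "u < s" "v < s" "u \<noteq> v"
  shows "u \<in> J \<or> v \<in> J"
proof (rule ccontr)
  assume "\<not> (u \<in> J \<or> v \<in> J)"
  then have "J \<subseteq> {..<s} - {u,v}" using J by auto
  then have "card J \<le> card ({..<s} - {u,v})" by (intro card_mono) auto
  also have "\<dots> = s - 2" using uv by (subst card_Diff_subset) auto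
  finally show False using J uv by linarith
qed

definition aont_matrix :: "nat \<Rightarrow> bit mat" where
  "aont_matrix s = mat s s (\<lambda>(i,j). of_bool (j = s - 1 \<or> (i \<noteq> j \<and> i \<noteq> s - 1)))"

lemma aont_matrix_carrier: "aont_matrix s \<in> carrier_mat s s"
  by (simp add: aont_matrix_def)

lemma aont_matrix_index:
  "i < s \<Longrightarrow> j < s \<Longrightarrow> aont_matrix s $$ (i,j) = of_bool (j = s - 1 \<or> (i \<noteq> j \<and> i \<noteq> s - 1))"
  by (simp add: aont_matrix_def)

lemma aont_matrix_last_col: "i < s \<Longrightarrow> aont_matrix s $$ (i, s - 1) = 1"
  by (simp add: aont_matrix_index)

lemma aont_matrix_last_row: "j < s - 1 \<Longrightarrow> aont_matrix s $$ (s - 1, j) = 0"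
  by (simp add: aont_matrix_index)

lemma aont_matrix_diag: "i < s - 1 \<Longrightarrow> aont_matrix s $$ (i, i) = 0"
  by (simp add: aont_matrix_index)

lemma aont_matrix_off_diag: "i < s - 1 \<Longrightarrow> j < s - 1 \<Longrightarrow> i \<noteq> j \<Longrightarrow> aont_matrix s $$ (i, j) = 1"
  by (simp add: aont_matrix_index)

lemma aont_matrix_involution:
  assumes "odd s"
  shows "aont_matrix s * aont_matrix s = 1\<^sub>m s"
proof (rule eq_matI)
  fix i k assume "i < dim_row (1\<^sub>m s)" "k < dim_col (1\<^sub>m s)"
  then have ik: "i < s" "k < s" by auto
  let ?P = "\<lambda>i j. j = s - 1 \<or> (i \<noteq> j \<and> i \<noteq> s - 1)"
  let ?paths = "{..<s} \<inter> {j. ?P i j \<and> ?P j k}"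
  have "(aont_matrix s * aont_matrix s) $$ (i,k)
      = (\<Sum>j<s. aont_matrix s $$ (i,j) * aont_matrix s $$ (j,k))"
    using ik aont_matrix_carrier[of s] by (simp add: scalar_prod_def lessThan_atLeast0)
  also have "\<dots> = (\<Sum>j<s. of_bool (?P i j \<and> ?P j k))"
    using ik by (intro sum.cong refl) (simp only: lessThan_iff aont_matrix_index of_bool_conj)
  also have "\<dots> = of_nat (card ?paths)"
    by simp
  also have "\<dots> = 1\<^sub>m s $$ (i,k)"
  proof (cases "i = s - 1")
    case True
    then have "?paths = (if k = s - 1 then {s - 1} else {})"
      using ik by auto
    then show ?thesis
      using True ik by simp
  next
    case i: False
    show ?thesis
    proof (cases "k = s - 1")
      case True
      then have "?paths = {..<s} - {i}"
        using i ik by auto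
      moreover have "even (s - 1)"
        using assms by presburger
      ultimately show ?thesis
        using True i ik by (simp add: of_nat_bit)
    next
      case k: False
      then have "?paths = {..<s} - {i, k, s - 1}"
        using i ik by auto
      moreover have "card ({..<s} - {i, k, s - 1}) = s - card {i, k, s - 1}"
        using ik by (simp add: card_Diff_subset)
      moreover have "card {i, k, s - 1} = (if i = k then 2 else 3)"
        using i k by auto
      ultimately have "card ?paths = (if i = k then s - 2 else s - 3)"
        by simp
      moreover have "odd (s - 2)" "even (s - 3)"
        using assms i ik by presburger+
      ultimately show ?thesis
        using i k ik by (simp add: of_nat_bit)
    qed
  qed
  finally show "(aont_matrix s * aont_matrix s) $$ (i,k) = 1\<^sub>m s $$ (i,k)" .
qed (simp_all add: aont_matrix_def)

lemma aont_matrix_nonsingular_minor: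
  assumes s: "4 \<le> s" and ab: "a < b" "b < s" and J: "J \<subseteq> {..<s}" "card J = s - 1"
  obtains i1 i2 where "i1 \<in> J" "i2 \<in> J" "i1 \<noteq> i2"
    "aont_matrix s $$ (i1,a) * aont_matrix s $$ (i2,b)
      - aont_matrix s $$ (i1,b) * aont_matrix s $$ (i2,a) \<noteq> 0"
proof (cases "b = s - 1")
  case True
  obtain z where z: "z \<in> J" "z = a \<or> z = s - 1"
    using subset_card_pred_meets_pair[OF J, of a "s - 1"] ab True by auto
  obtain x1 x2 where "x1 < 3" "x2 < 3" "x1 \<noteq> x2" "x1 \<noteq> a" "x2 \<noteq> a"
    by (rule that[of "(a + 1) mod 3" "(a + 2) mod 3"]) presburger+
  then obtain x where x: "x \<in> J" "x < s - 1" "x \<noteq> a"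
    using subset_card_pred_meets_pair[OF J, of x1 x2] s by fastforce
  have "aont_matrix s $$ (z,a) = 0"
    using z ab True aont_matrix_diag[of a s] aont_matrix_last_row[of a s] by auto
  moreover have "aont_matrix s $$ (x,a) = 1"
    using x ab True by (simp add: aont_matrix_off_diag)
  moreover have "aont_matrix s $$ (z,b) = 1" "aont_matrix s $$ (x,b) = 1"
    unfolding True using aont_matrix_last_col z(1) x(1) J(1) by blast+
  moreover have "z \<noteq> x"
    using z x by auto
  ultimately show ?thesis
    using that[OF z(1) x(1)] by simp
next
  case False
  then have b: "b < s - 1"
    using ab by simp
  define x where "x = (if 0 \<notin> {a,b} then 0 else if 1 \<notin> {a,b} then 1 else (2::nat))"
  have x: "x < s - 1" "x \<noteq> a" "x \<noteq> b"
    unfolding x_def using ab s by auto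
  have entries: "aont_matrix s $$ (a,a) = 0" "aont_matrix s $$ (b,b) = 0"
    "aont_matrix s $$ (a,b) = 1" "aont_matrix s $$ (b,a) = 1"
    "aont_matrix s $$ (x,a) = 1" "aont_matrix s $$ (x,b) = 1"
    using ab b x by (simp_all add: aont_matrix_diag aont_matrix_off_diag)
  consider "a \<in> J" "b \<in> J" | "b \<in> J" "x \<in> J" | "a \<in> J" "x \<in> J"
    using subset_card_pred_meets_pair[OF J, of a b] subset_card_pred_meets_pair[OF J, of a x]
      subset_card_pred_meets_pair[OF J, of b x] ab x by fastforce
  then show ?thesis
  proof cases
    case 1
    then show ?thesis using that[of a b] ab entries by simp
  next
    case 2
    then show ?thesis using that[of b x] x entries by simp
  next
    case 3
    then show ?thesis using that[of a x] x entries by simp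
  qed
qed

theorem mainTheorem14:
  fixes s :: nat
  assumes "odd s" and "s \<ge> 5"
  shows "\<exists>M :: bit mat. linear_AONT 2 (s - 1) s 2 M"
proof
  have "invertible_mat (aont_matrix s)"
    using aont_matrix_involution[OF assms(1)] aont_matrix_carrier[of s]
    unfolding invertible_mat_def inverts_mat_def by auto
  moreover have "vec_space.rank (s - 1) (submatrix (aont_matrix s) J I) = 2"
    if I: "I \<subseteq> {..<s}" "card I = 2" and J: "J \<subseteq> {..<s}" "card J = s - 1" for I J
  proof -
    obtain a b where ab: "I = {a,b}" "a < b"
      using I(2) by (metis card_2_iff insert_commute linorder_neqE_nat)
    then have "b < s" using I(1) by auto
    from assms(2) have "4 \<le> s"
      by simp
    then obtain i1 i2 where "i1 \<in> J" "i2 \<in> J" "i1 \<noteq> i2"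
      "aont_matrix s $$ (i1,a) * aont_matrix s $$ (i2,b)
        - aont_matrix s $$ (i1,b) * aont_matrix s $$ (i2,a) \<noteq> 0"
      by (rule aont_matrix_nonsingular_minor[OF _ ab(2) \<open>b < s\<close> J])
    then show ?thesis
      using rank_submatrix_two_columns[OF aont_matrix_carrier J(1) ab(2) \<open>b < s\<close>] ab(1) J(2)
      by simp
  qed
  ultimately show "linear_AONT 2 (s - 1) s 2 (aont_matrix s)"
    unfolding linear_AONT_def using card_UNIV_bit aont_matrix_carrier by auto
qed

end
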